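(* Let $C=(\mathcal P,\mathcal B,\mathcal I)$ be an $(n,\alpha,v,\rho)$-FR code with dual $C^t$. Then for every $k=1,2,\dots,n$, $$M_k(C)=\sum_{i=1}^{v}\mathbb I\big(k>N_i(C^t)\big),$$ where $\mathbb I(P)$ equals $1$ if $P$ holds and $0$ otherwise. Equivalently, with $N_0(C^t)=n$ and $N_v(C^t)=0$, for each $\ell\in\{0,1,\dots,v-1\}$ one has $M_k(C)=v-\ell$ for all integers $k$ with $N_{\ell+1}(C^t)<k\le N_\ell(C^t)$.
   Context: An incidence structure is a triple $(\mathcal P,\mathcal B,\mathcal I)$ with $\mathcal P$ (points) and $\mathcal B$ (blocks) finite sets and $\mathcal I\subseteq \mathcal P\times\mathcal B$; repeated blocks are allowed. An $(n,\alpha,v,\rho)$-FR code is an incidence structure with $|\mathcal B|=n$, $|\mathcal P|=v$, every point incident with exactly $\rho$ blocks and every block incident with exactly $\alpha$ points. The dual of $C=(\mathcal P,\mathcal B,\mathcal I)$ is $C^t=(\mathcal B,\mathcal P,\mathcal I^t)$ with $\mathcal I^t=\{(B,p):(p,B)\in\mathcal I\}$. For an incidence structure $C=(\mathcal P,\mathcal B,\mathcal I)$ and $0\le k\le|\mathcal B|$, the supported file size is $M_k(C)=\min_{\mathcal K\subseteq\mathcal B,|\mathcal K|=k}|\{p\in\mathcal P:\exists B\in\mathcal K,(p,B)\in\mathcal I\}|$ (so $M_0(C)=0$), and $N_k(C)=|\mathcal P|-M_k(C)=\max_{\mathcal K\subseteq\mathcal B,|\mathcal K|=k}|\{p\in\mathcal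 P:\nexists B\in\mathcal K,(p,B)\in\mathcal I\}|$. Thus $N_\ell(C^t)$, for $0\le \ell\le v$, is the maximum over $\ell$-subsets $\mathcal L\subseteq\mathcal P$ of the number of blocks $B\in\mathcal B$ incident with no point of $\mathcal L$. *)

theory Defs
  imports Main
begin

text \<open>An incidence structure is given by a point set P, a block set B (blocks are
abstract labels, so repeated blocks are allowed) and an incidence relation I.\<close>

definition incidence_structure :: "'p set \<Rightarrow> 'b set \<Rightarrow> ('p \<times> 'b) set \<Rightarrow> bool" where
  "incidence_structure P B I \<longleftrightarrow> finite P \<and> finite B \<and> I \<subseteq> P \<times> B"

definition FR_code :: "nat \<Rightarrow> nat \<Rightarrow> nat \<Rightarrow> nat \<Rightarrow> 'p set \<Rightarrow> 'b set \<Rightarrow> ('p \<times> 'b) set \<Rightarrow> bool" where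
  "FR_code n \<alpha> v \<rho> P B I \<longleftrightarrow> incidence_structure P B I \<and> card B = n \<and> card P = v \<and>
     (\<forall>p\<in>P. card {b\<in>B. (p, b) \<in> I} = \<rho>) \<and>
     (\<forall>b\<in>B. card {p\<in>P. (p, b) \<in> I} = \<alpha>)"

text \<open>Dual incidence relation: the dual of (P,B,I) is (B,P,dual_inc I).\<close>
definition dual_inc :: "('p \<times> 'b) set \<Rightarrow> ('b \<times> 'p) set" where
  "dual_inc I = {(b, p). (p, b) \<in> I}"

definition covered :: "'p set \<Rightarrow> ('p \<times> 'b) set \<Rightarrow> 'b set \<Rightarrow> 'p set" where
  "covered P I K = {p\<in>P. \<exists>b\<in>K. (p, b) \<in> I}"

definition M_size :: "'p set \<Rightarrow> 'b set \<Rightarrow> ('p \<times> 'b) set \<Rightarrow> nat \<Rightarrow> nat" where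
  "M_size P B I k = Min {card (covered P I K) | K. K \<subseteq> B \<and> card K = k}"

definition N_size :: "'p set \<Rightarrow> 'b set \<Rightarrow> ('p \<times> 'b) set \<Rightarrow> nat \<Rightarrow> nat" where
  "N_size P B I k = card P - M_size P B I k"

end

theory Submission
  imports Defs
begin

text \<open>A set K of blocks and a set L of points are incidence-free exactly when K avoids the
blocks covered by L, exactly when L avoids the points covered by K. Hence k blocks covering
at most v - l points exist iff l points meeting at most n - k blocks exist, i.e.
k \<le> N_l(C^t) iff M_k(C) + l \<le> v. So k > N_i(C^t) holds for exactly the M_k(C) indices
i > v - M_k(C).\<close>

lemma dual_inc_dual_inc [simp]: "dual_inc (dual_inc I) = I"
  by (auto simp: dual_inc_def)

lemma M_size_le_iff:
  assumes "finite B" "k \<le> card B"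
  shows "M_size P B I k \<le> x \<longleftrightarrow> (\<exists>K \<subseteq> B. card K = k \<and> card (covered P I K) \<le> x)"
proof -
  let ?S = "{card (covered P I K) | K. K \<subseteq> B \<and> card K = k}"
  have "?S \<subseteq> (\<lambda>K. card (covered P I K)) ` Pow B" by auto
  then have "finite ?S" using assms(1) finite_subset by blast
  moreover have "?S \<noteq> {}" using obtain_subset_with_card_n[OF assms(2)] by blast
  ultimately show ?thesis unfolding M_size_def by (subst Min_le_iff) blast+
qed

lemma M_size_le_card:
  assumes "finite P" "finite B" "k \<le> card B"
  shows "M_size P B I k \<le> card P"
proof -
  obtain K where "K \<subseteq> B" "card K = k" using obtain_subset_with_card_n[OF assms(3)] by metis
  moreover have "card (covered P I K) \<le> card P"
    using assms(1) by (intro card_mono) (auto simp: covered_def)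
  ultimately show ?thesis using M_size_le_iff[OF assms(2,3)] by blast
qed

lemma covered_subset_Diff_if_avoids_dual_covered:
  assumes "K \<subseteq> B - covered B (dual_inc I) L"
  shows "covered P I K \<subseteq> P - L"
  using assms by (auto simp: covered_def dual_inc_def)

lemma exists_blocks_avoiding_points:
  assumes "finite P" "finite B" "L \<subseteq> P" "card L = l" "k \<le> card B"
    and "card (covered B (dual_inc I) L) \<le> card B - k"
  shows "\<exists>K \<subseteq> B. card K = k \<and> card (covered P I K) \<le> card P - l"
proof -
  let ?C = "covered B (dual_inc I) L"
  have "?C \<subseteq> B" by (auto simp: covered_def)
  then have "card (B - ?C) = card B - card ?C"
    using assms(2) by (meson card_Diff_subset finite_subset)
  then have "k \<le> card (B - ?C)" using assms(5,6) by linarith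
  then obtain K where K: "K \<subseteq> B - ?C" "card K = k" using obtain_subset_with_card_n by metis
  have "card (covered P I K) \<le> card (P - L)"
    using covered_subset_Diff_if_avoids_dual_covered[OF K(1)] assms(1) by (intro card_mono) auto
  also have "\<dots> = card P - l"
    using assms(1,3,4) by (simp add: card_Diff_subset finite_subset)
  finally show ?thesis using K by blast
qed

lemma le_N_size_dual_iff:
  assumes fP: "finite P" and fB: "finite B" and k: "k \<le> card B" and l: "l \<le> card P"
  shows "k \<le> N_size B P (dual_inc I) l \<longleftrightarrow> M_size P B I k + l \<le> card P"
proof -
  let ?J = "dual_inc I"
  have "k \<le> N_size B P ?J l \<longleftrightarrow> M_size B P ?J l \<le> card B - k"
    unfolding N_size_def using M_size_le_card[OF fB fP l, of ?J] k by linarith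
  also have "\<dots> \<longleftrightarrow> (\<exists>L \<subseteq> P. card L = l \<and> card (covered B ?J L) \<le> card B - k)"
    using M_size_le_iff[OF fP l] .
  also have "\<dots> \<longleftrightarrow> (\<exists>K \<subseteq> B. card K = k \<and> card (covered P I K) \<le> card P - l)"
    using exists_blocks_avoiding_points[OF fP fB _ _ k, of _ l I]
      exists_blocks_avoiding_points[OF fB fP _ _ l, of _ k ?J]
    by auto
  also have "\<dots> \<longleftrightarrow> M_size P B I k \<le> card P - l"
    using M_size_le_iff[OF fB k, of P I] by (rule sym)
  also have "\<dots> \<longleftrightarrow> M_size P B I k + l \<le> card P" using l by linarith
  finally show ?thesis .
qed

lemma sum_indicator_add_gt:
  assumes "m \<le> (v::nat)"
  shows "(\<Sum>i=1..v. if m + i > v then 1 else 0) = m"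
proof -
  have "(\<Sum>i=1..v. if m + i > v then 1 else 0) = card {i\<in>{1..v}. m + i > v}"
    by (simp add: sum.If_cases Int_def conj_commute)
  also have "{i\<in>{1..v}. m + i > v} = {v - m + 1..v}" using assms by auto
  finally show ?thesis using assms by simp
qed

theorem theorem1:
  fixes P :: "'p set" and B :: "'b set" and I :: "('p \<times> 'b) set"
    and n \<alpha> v \<rho> :: nat
  assumes "FR_code n \<alpha> v \<rho> P B I"
  shows "\<forall>k\<in>{1..n}. M_size P B I k =
           (\<Sum>i=1..v. if k > N_size B P (dual_inc I) i then 1 else 0)"
proof
  fix k assume "k \<in> {1..n}"
  from assms have fP: "finite P" and fB: "finite B" and cP: "card P = v" and "card B = n"
    by (auto simp: FR_code_def incidence_structure_def)
  with \<open>k \<in> {1..n}\<close> have k: "k \<le> card B" by simp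
  have "(\<Sum>i=1..v. if k > N_size B P (dual_inc I) i then 1 else 0)
      = (\<Sum>i=1..v. if M_size P B I k + i > v then 1 else (0::nat))"
    using le_N_size_dual_iff[OF fP fB k] cP by (intro sum.cong) (auto simp: not_le [symmetric])
  also have "\<dots> = M_size P B I k"
    using sum_indicator_add_gt M_size_le_card[OF fP fB k] cP by simp
  finally show "M_size P B I k = (\<Sum>i=1..v. if k > N_size B P (dual_inc I) i then 1 else 0)" ..
qed

end
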